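(* The average variance of the entries of $\mathcal P(\tilde X_R)$, namely $\frac1{N^2}\sum_{k_1,k_2}\operatorname{var}\big(\mathcal P(\tilde X_R)[k_1,k_2]\big)$, is $O(M^2/N^2)$.
   Context: $M,N$ positive integers with $N>2M$; $g$ is a real $M\times M$ image with values in $[0,255]$ zero-padded to $N\times N$, $\tilde g=\tilde g_R+j\tilde g_I$ its $N\times N$ 2D-DFT $\mathfrak F(g)$, and $\tilde X_R=\mathbb 1(\tilde g_R+W_R+d_R>0)-\tfrac12$ entrywise, where $W_R$ has independent entries of zero-mean noise of known distribution symmetric about $0$ and $d_R$ is independent AWGN dither. $\mathcal P(\tilde h)=\mathfrak F(\textsc{Clip}(\textsc{Proj}(\mathfrak F^{-1}(\tilde h))))$, where $\textsc{Proj}$ zeroes spatial-domain pixels outside the support region (the $2M^2$ pixels of the image block and its reflection $(n_1,n_2)\mapsto(-n_1\bmod N,-n_2\bmod N)$) and $\textsc{Clip}$ clips entries to $[0,255]$. *)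

theory Defs
  imports "HOL-Probability.Probability"
begin

definition dft2 :: "nat \<Rightarrow> (nat \<Rightarrow> nat \<Rightarrow> complex) \<Rightarrow> nat \<Rightarrow> nat \<Rightarrow> complex" where
  "dft2 N h k1 k2 = (1 / of_nat N) *
     (\<Sum>n1<N. \<Sum>n2<N. h n1 n2 *
        cis (- 2 * pi * (real k1 * real n1 + real k2 * real n2) / real N))"

definition idft2 :: "nat \<Rightarrow> (nat \<Rightarrow> nat \<Rightarrow> complex) \<Rightarrow> nat \<Rightarrow> nat \<Rightarrow> complex" where
  "idft2 N h n1 n2 = (1 / of_nat N) *
     (\<Sum>k1<N. \<Sum>k2<N. h k1 k2 *
        cis (2 * pi * (real k1 * real n1 + real k2 * real n2) / real N))"

definition support_region :: "nat \<Rightarrow> nat \<Rightarrow> (nat \<times> nat) set" where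
  "support_region N M =
     {(n1, n2). n1 < M \<and> n2 < M} \<union>
     {((N - n1) mod N, (N - n2) mod N) | n1 n2. n1 < M \<and> n2 < M}"

definition proj_supp :: "nat \<Rightarrow> nat \<Rightarrow> (nat \<Rightarrow> nat \<Rightarrow> complex) \<Rightarrow> nat \<Rightarrow> nat \<Rightarrow> complex" where
  "proj_supp N M h n1 n2 = (if (n1, n2) \<in> support_region N M then h n1 n2 else 0)"

definition clip :: "(nat \<Rightarrow> nat \<Rightarrow> complex) \<Rightarrow> nat \<Rightarrow> nat \<Rightarrow> complex" where
  "clip h n1 n2 = complex_of_real (max 0 (min 255 (Re (h n1 n2))))"

definition Pop :: "nat \<Rightarrow> nat \<Rightarrow> (nat \<Rightarrow> nat \<Rightarrow> complex) \<Rightarrow> nat \<Rightarrow> nat \<Rightarrow> complex" where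
  "Pop N M h = dft2 N (clip (proj_supp N M (idft2 N h)))"

definition zero_pad :: "nat \<Rightarrow> (nat \<Rightarrow> nat \<Rightarrow> real) \<Rightarrow> nat \<Rightarrow> nat \<Rightarrow> complex" where
  "zero_pad M g n1 n2 = (if n1 < M \<and> n2 < M then complex_of_real (g n1 n2) else 0)"

text \<open>One-bit measurement of the real part of the DFT with noise W and dither d.\<close>
definition XR :: "nat \<Rightarrow> nat \<Rightarrow> (nat \<Rightarrow> nat \<Rightarrow> real) \<Rightarrow> (nat \<Rightarrow> nat \<Rightarrow> 'w \<Rightarrow> real)
                 \<Rightarrow> (nat \<Rightarrow> nat \<Rightarrow> 'w \<Rightarrow> real) \<Rightarrow> 'w \<Rightarrow> nat \<Rightarrow> nat \<Rightarrow> complex" where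
  "XR N M g W d \<omega> k1 k2 =
     complex_of_real ((if Re (dft2 N (zero_pad M g) k1 k2) + W k1 k2 \<omega> + d k1 k2 \<omega> > 0
                       then 1 else 0) - 1/2)"

definition cvariance :: "'w measure \<Rightarrow> ('w \<Rightarrow> complex) \<Rightarrow> real" where
  "cvariance P Z = prob_space.expectation P (\<lambda>\<omega>. (cmod (Z \<omega> - prob_space.expectation P Z))\<^sup>2)"

end

theory Submission
  imports Defs
begin

(*
  Variance is at most the second moment, so the summed variances are bounded by the expected
  energy of P(X_R) on the frequency grid. The DFT is unitary, so by Parseval this energy equals
  the energy of the clipped and projected image, which vanishes outside the 2M^2 pixels of the
  support region and is at most 255^2 per pixel. The bound 2 * 255^2 * M^2 thus holds for every
  realisation of noise and dither.
*)

lemma sum_cis_orthogonal: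
  assumes "m < N" "n < N"
  shows "(\<Sum>k<N. cis (2 * pi * real k * (real m - real n) / real N)) = (if m = n then of_nat N else 0)"
proof -
  have N: "0 < N" using assms by simp
  define root where "root j = cis (2 * pi * real j / real N)" for j
  \<comment> \<open>Qualified names: Complex_Transcendental shadows them with exp-based variants.\<close>
  have roots: "bij_betw root {..<N} {z. z ^ N = 1}"
    unfolding root_def by (rule Complex.bij_betw_roots_unity[OF N])
  define z where "z = root m / root n"
  have z_power: "z ^ k = cis (2 * pi * real k * (real m - real n) / real N)" for k
    by (simp add: z_def root_def cis_divide Complex.DeMoivre algebra_simps diff_divide_distrib)
  have root_power: "root j ^ N = 1" if "j < N" for j
    using roots that by (auto simp: bij_betw_def)
  have "z ^ N = 1"
    using assms by (simp add: z_def power_divide root_power)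
  moreover have "z = 1 \<longleftrightarrow> m = n"
    using roots assms by (auto simp: z_def root_def bij_betw_def inj_on_def)
  ultimately show ?thesis
    by (simp add: z_power [symmetric] sum_gp_strict)
qed

definition dft1 :: "nat \<Rightarrow> (nat \<Rightarrow> complex) \<Rightarrow> nat \<Rightarrow> complex" where
  "dft1 N f k = (\<Sum>n<N. f n * (cis (- 2 * pi * real k * real n / real N) / sqrt (real N)))"

lemma sum_cmod_square_unitary:
  fixes u :: "nat \<Rightarrow> nat \<Rightarrow> complex"
  assumes orthonormal:
    "\<And>n m. n < N \<Longrightarrow> m < N \<Longrightarrow> (\<Sum>k<K. u k n * cnj (u k m)) = (if n = m then 1 else 0)"
  shows "(\<Sum>k<K. (cmod (\<Sum>n<N. f n * u k n))\<^sup>2) = (\<Sum>n<N. (cmod (f n))\<^sup>2)"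
proof -
  have "complex_of_real (\<Sum>k<K. (cmod (\<Sum>n<N. f n * u k n))\<^sup>2)
      = (\<Sum>k<K. (\<Sum>n<N. f n * u k n) * cnj (\<Sum>m<N. f m * u k m))"
    by (simp only: of_real_sum complex_norm_square)
  also have "\<dots> = (\<Sum>k<K. \<Sum>n<N. \<Sum>m<N. f n * cnj (f m) * (u k n * cnj (u k m)))"
    by (simp add: sum_product mult_ac)
  also have "\<dots> = (\<Sum>n<N. \<Sum>m<N. f n * cnj (f m) * (\<Sum>k<K. u k n * cnj (u k m)))"
    by (subst sum.swap, subst sum.swap) (simp add: sum_distrib_left)
  also have "\<dots> = (\<Sum>n<N. \<Sum>m<N. f n * cnj (f m) * (if n = m then 1 else 0))"
    by (intro sum.cong refl) (simp add: orthonormal)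
  also have "\<dots> = (\<Sum>n<N. f n * cnj (f n))"
    by (simp add: if_distrib sum.delta cong: if_cong)
  also have "\<dots> = complex_of_real (\<Sum>n<N. (cmod (f n))\<^sup>2)"
    by (simp only: of_real_sum complex_norm_square)
  finally show ?thesis
    by (simp only: of_real_eq_iff)
qed

lemma parseval_dft1:
  "(\<Sum>k<N. (cmod (dft1 N f k))\<^sup>2) = (\<Sum>n<N. (cmod (f n))\<^sup>2)"
  unfolding dft1_def
proof (rule sum_cmod_square_unitary)
  fix n m assume "n < N" "m < N"
  then have "0 < N" by simp
  have "cis (- 2 * pi * real k * real n / real N) / sqrt (real N)
        * cnj (cis (- 2 * pi * real k * real m / real N) / sqrt (real N))
      = cis (2 * pi * real k * (real m - real n) / real N) / of_nat N" for k
    using \<open>0 < N\<close> by (simp add: cis_cnj cis_mult field_simps flip: of_real_mult)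
  then show "(\<Sum>k<N. cis (- 2 * pi * real k * real n / real N) / sqrt (real N)
          * cnj (cis (- 2 * pi * real k * real m / real N) / sqrt (real N)))
        = (if n = m then 1 else 0)"
    using \<open>n < N\<close> \<open>m < N\<close> \<open>0 < N\<close> by (simp add: sum_cis_orthogonal flip: sum_divide_distrib)
qed

lemma dft2_eq_dft1_dft1:
  "dft2 N h k1 k2 = dft1 N (\<lambda>n1. dft1 N (\<lambda>n2. h n1 n2) k2) k1"
proof -
  have kernel: "cis (- 2 * pi * real k2 * real n2 / real N) / sqrt (real N)
        * (cis (- 2 * pi * real k1 * real n1 / real N) / sqrt (real N))
      = 1 / of_nat N * cis (- 2 * pi * (real k1 * real n1 + real k2 * real n2) / real N)" for n1 n2
    by (cases "N = 0") (simp_all add: cis_mult field_simps flip: of_real_mult)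
  have "dft1 N (\<lambda>n1. dft1 N (\<lambda>n2. h n1 n2) k2) k1
      = (\<Sum>n1<N. \<Sum>n2<N. h n1 n2 * (cis (- 2 * pi * real k2 * real n2 / real N) / sqrt (real N)
          * (cis (- 2 * pi * real k1 * real n1 / real N) / sqrt (real N))))"
    unfolding dft1_def by (simp add: sum_distrib_right sum_divide_distrib mult.assoc)
  also have "\<dots> = dft2 N h k1 k2"
    unfolding kernel dft2_def by (simp add: sum_distrib_left mult_ac)
  finally show ?thesis ..
qed

lemma parseval_dft2:
  "(\<Sum>k1<N. \<Sum>k2<N. (cmod (dft2 N h k1 k2))\<^sup>2) = (\<Sum>n1<N. \<Sum>n2<N. (cmod (h n1 n2))\<^sup>2)"
proof -
  have "(\<Sum>k1<N. \<Sum>k2<N. (cmod (dft2 N h k1 k2))\<^sup>2)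
      = (\<Sum>k2<N. \<Sum>k1<N. (cmod (dft1 N (\<lambda>n1. dft1 N (\<lambda>n2. h n1 n2) k2) k1))\<^sup>2)"
    unfolding dft2_eq_dft1_dft1 by (rule sum.swap)
  also have "\<dots> = (\<Sum>k2<N. \<Sum>n1<N. (cmod (dft1 N (\<lambda>n2. h n1 n2) k2))\<^sup>2)"
    by (simp only: parseval_dft1)
  also have "\<dots> = (\<Sum>n1<N. \<Sum>k2<N. (cmod (dft1 N (\<lambda>n2. h n1 n2) k2))\<^sup>2)"
    by (rule sum.swap)
  also have "\<dots> = (\<Sum>n1<N. \<Sum>n2<N. (cmod (h n1 n2))\<^sup>2)"
    by (simp only: parseval_dft1)
  finally show ?thesis .
qed

lemma support_region_eq:
  "support_region N M
     = {..<M} \<times> {..<M} \<union> (\<lambda>(n1, n2). ((N - n1) mod N, (N - n2) mod N)) ` ({..<M} \<times> {..<M})"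
  unfolding support_region_def by auto

lemma finite_support_region: "finite (support_region N M)"
  unfolding support_region_eq by simp

lemma card_support_region: "card (support_region N M) \<le> 2 * M\<^sup>2"
proof -
  let ?block = "{..<M} \<times> {..<M}"
  let ?reflect = "\<lambda>(n1, n2). ((N - n1) mod N, (N - n2) mod N)"
  have "card (support_region N M) \<le> card ?block + card (?reflect ` ?block)"
    unfolding support_region_eq by (rule card_Un_le)
  also have "\<dots> \<le> 2 * card ?block"
    using card_image_le[of ?block ?reflect] by simp
  finally show ?thesis
    by (simp add: card_cartesian_product power2_eq_square)
qed

lemma sum_cmod_square_le_card:
  fixes h :: "nat \<Rightarrow> nat \<Rightarrow> complex"
  assumes "finite S"
    and vanish: "\<And>n1 n2. (n1, n2) \<notin> S \<Longrightarrow> h n1 n2 = 0"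
    and bound: "\<And>n1 n2. cmod (h n1 n2) \<le> B"
  shows "(\<Sum>n1<N. \<Sum>n2<N. (cmod (h n1 n2))\<^sup>2) \<le> B\<^sup>2 * card S"
proof -
  define F where "F p = (cmod (h (fst p) (snd p)))\<^sup>2" for p
  have "(\<Sum>n1<N. \<Sum>n2<N. (cmod (h n1 n2))\<^sup>2) = (\<Sum>p\<in>{..<N} \<times> {..<N}. F p)"
    by (simp add: F_def sum.cartesian_product case_prod_beta)
  also have "\<dots> = (\<Sum>p\<in>({..<N} \<times> {..<N}) \<inter> S. F p)"
    by (rule sum.mono_neutral_right) (auto simp: F_def vanish)
  also have "\<dots> \<le> (\<Sum>p\<in>S. F p)"
    by (rule sum_mono2[OF \<open>finite S\<close>]) (auto simp: F_def)
  also have "\<dots> \<le> (\<Sum>p\<in>S. B\<^sup>2)"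
    by (intro sum_mono) (simp add: F_def bound power_mono)
  finally show ?thesis
    by (simp add: mult.commute)
qed

lemma sum_cmod_square_clip_proj_supp:
  "(\<Sum>n1<N. \<Sum>n2<N. (cmod (clip (proj_supp N M h) n1 n2))\<^sup>2) \<le> 2 * 255\<^sup>2 * (real M)\<^sup>2"
proof -
  have "(\<Sum>n1<N. \<Sum>n2<N. (cmod (clip (proj_supp N M h) n1 n2))\<^sup>2)
      \<le> 255\<^sup>2 * real (card (support_region N M))"
    by (rule sum_cmod_square_le_card[OF finite_support_region])
      (simp_all add: clip_def proj_supp_def)
  also have "\<dots> \<le> 255\<^sup>2 * (2 * (real M)\<^sup>2)"
    using of_nat_mono[OF card_support_region[of N M]] by simp
  finally show ?thesis by simp
qed

lemma sum_cmod_square_Pop: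
  "(\<Sum>k1<N. \<Sum>k2<N. (cmod (Pop N M h k1 k2))\<^sup>2) \<le> 2 * 255\<^sup>2 * (real M)\<^sup>2"
  unfolding Pop_def parseval_dft2 by (rule sum_cmod_square_clip_proj_supp)

lemma borel_measurable_Pop:
  assumes "\<And>k1 k2. k1 < N \<Longrightarrow> k2 < N \<Longrightarrow> (\<lambda>\<omega>. X \<omega> k1 k2) \<in> borel_measurable P"
  shows "(\<lambda>\<omega>. Pop N M (X \<omega>) k1 k2) \<in> borel_measurable P"
proof -
  have "(\<lambda>\<omega>. idft2 N (X \<omega>) n1 n2) \<in> borel_measurable P" for n1 n2
    unfolding idft2_def
    by (intro borel_measurable_times borel_measurable_const borel_measurable_sum) (auto intro: assms)
  then have "(\<lambda>\<omega>. clip (proj_supp N M (idft2 N (X \<omega>))) n1 n2) \<in> borel_measurable P" for n1 n2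
    unfolding clip_def proj_supp_def by (cases "(n1, n2) \<in> support_region N M") auto
  then show ?thesis
    unfolding Pop_def dft2_def
    by (intro borel_measurable_times borel_measurable_const borel_measurable_sum) auto
qed

lemma borel_measurable_XR:
  assumes "W k1 k2 \<in> borel_measurable P" "d k1 k2 \<in> borel_measurable P"
  shows "(\<lambda>\<omega>. XR N M g W d \<omega> k1 k2) \<in> borel_measurable P"
  unfolding XR_def using assms by measurable

lemma cvariance_eq:
  fixes Z :: "'w \<Rightarrow> complex"
  assumes P: "prob_space P" and Z: "Z \<in> borel_measurable P" and bounded: "\<And>\<omega>. cmod (Z \<omega>) \<le> B"
  shows "cvariance P Z = prob_space.expectation P (\<lambda>\<omega>. (cmod (Z \<omega>))\<^sup>2)
           - (cmod (prob_space.expectation P Z))\<^sup>2"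
proof -
  interpret prob_space P by (rule P)
  define c where "c = expectation Z"
  have int_Z: "integrable P Z"
    using Z bounded by (intro integrable_const_bound[where B = B]) auto
  have int_sq: "integrable P (\<lambda>\<omega>. (cmod (Z \<omega>))\<^sup>2)"
    using Z bounded
    by (intro integrable_const_bound[where B = "B\<^sup>2"]) (auto intro!: AE_I2 power_mono)
  define R where "R \<omega> = Re (cnj c * Z \<omega>)" for \<omega>
  have int_R: "integrable P R"
    using int_Z unfolding R_def[abs_def] by auto
  have expectation_R: "expectation R = (cmod c)\<^sup>2"
    using int_Z unfolding R_def[abs_def] by (simp add: c_def cmod_power2 flip: power2_eq_square)
  have expand: "(cmod (Z \<omega> - c))\<^sup>2 = (cmod (Z \<omega>))\<^sup>2 - 2 * R \<omega> + (cmod c)\<^sup>2" for \<omega>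
    by (simp add: R_def cmod_power2 algebra_simps power2_diff)
  have "cvariance P Z = expectation (\<lambda>\<omega>. (cmod (Z \<omega>))\<^sup>2) - 2 * expectation R + (cmod c)\<^sup>2"
    unfolding cvariance_def c_def[symmetric] expand using int_sq int_R prob_space by simp
  then show ?thesis
    using expectation_R by (simp add: c_def)
qed

lemma sum_cvariance_le:
  fixes Z :: "'i \<Rightarrow> 'w \<Rightarrow> complex"
  assumes P: "prob_space P" and "finite I"
    and Z: "\<And>i. i \<in> I \<Longrightarrow> Z i \<in> borel_measurable P"
    and energy: "\<And>\<omega>. (\<Sum>i\<in>I. (cmod (Z i \<omega>))\<^sup>2) \<le> B"
  shows "(\<Sum>i\<in>I. cvariance P (Z i)) \<le> B"
proof -
  interpret prob_space P by (rule P)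
  have sq_bound: "(cmod (Z i \<omega>))\<^sup>2 \<le> B" if "i \<in> I" for i \<omega>
    using member_le_sum[of i I "\<lambda>i. (cmod (Z i \<omega>))\<^sup>2"] energy[of \<omega>] that \<open>finite I\<close> by simp
  have bound: "cmod (Z i \<omega>) \<le> sqrt B" if "i \<in> I" for i \<omega>
    using sq_bound[OF that] by (simp add: real_le_rsqrt)
  have int_sq: "integrable P (\<lambda>\<omega>. (cmod (Z i \<omega>))\<^sup>2)" if "i \<in> I" for i
    using Z[OF that] sq_bound[OF that] by (intro integrable_const_bound[where B = B]) auto
  have "(\<Sum>i\<in>I. cvariance P (Z i)) \<le> (\<Sum>i\<in>I. expectation (\<lambda>\<omega>. (cmod (Z i \<omega>))\<^sup>2))"
    by (intro sum_mono) (simp add: cvariance_eq[OF P Z bound])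
  also have "\<dots> = expectation (\<lambda>\<omega>. \<Sum>i\<in>I. (cmod (Z i \<omega>))\<^sup>2)"
    using int_sq by (rule Bochner_Integration.integral_sum[symmetric])
  also have "\<dots> \<le> B"
    using int_sq energy by (intro integral_le_const) auto
  finally show ?thesis .
qed

theorem lemma4:
  "\<exists>C::real. \<forall>(P::'w measure) (M::nat) (N::nat) (g::nat \<Rightarrow> nat \<Rightarrow> real)
       (W::nat \<Rightarrow> nat \<Rightarrow> 'w \<Rightarrow> real) (d::nat \<Rightarrow> nat \<Rightarrow> 'w \<Rightarrow> real) (\<sigma>::real).
     prob_space P \<and> 0 < M \<and> 2 * M < N
     \<and> (\<forall>i j. i < M \<and> j < M \<longrightarrow> 0 \<le> g i j \<and> g i j \<le> 255)
     \<and> (\<forall>k1 k2. k1 < N \<and> k2 < N \<longrightarrow>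
           W k1 k2 \<in> borel_measurable P \<and> integrable P (W k1 k2)
           \<and> prob_space.expectation P (W k1 k2) = 0
           \<and> distr P borel (W k1 k2) = distr P borel (\<lambda>\<omega>. - W k1 k2 \<omega>)
           \<and> distributed P lborel (d k1 k2) (\<lambda>x. ennreal (normal_density 0 \<sigma> x)))
     \<and> 0 < \<sigma>
     \<and> prob_space.indep_vars P (\<lambda>_. borel)
          (\<lambda>i. case i of Inl (k1, k2) \<Rightarrow> W k1 k2 | Inr (k1, k2) \<Rightarrow> d k1 k2)
          (({0..<N} \<times> {0..<N}) <+> ({0..<N} \<times> {0..<N}))
     \<longrightarrow> (1 / (real N)\<^sup>2) *
           (\<Sum>k1<N. \<Sum>k2<N. cvariance P (\<lambda>\<omega>. Pop N M (XR N M g W d \<omega>) k1 k2))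
         \<le> C * (real M)\<^sup>2 / (real N)\<^sup>2"
proof (intro exI[where x = "2 * 255\<^sup>2"] allI impI, elim conjE)
  fix P :: "'w measure" and M N :: nat and g :: "nat \<Rightarrow> nat \<Rightarrow> real"
    and W d :: "nat \<Rightarrow> nat \<Rightarrow> 'w \<Rightarrow> real" and \<sigma> :: real
  assume P: "prob_space P"
    and noise: "\<forall>k1 k2. k1 < N \<and> k2 < N \<longrightarrow>
           W k1 k2 \<in> borel_measurable P \<and> integrable P (W k1 k2)
           \<and> prob_space.expectation P (W k1 k2) = 0
           \<and> distr P borel (W k1 k2) = distr P borel (\<lambda>\<omega>. - W k1 k2 \<omega>)
           \<and> distributed P lborel (d k1 k2) (\<lambda>x. ennreal (normal_density 0 \<sigma> x))"
  define Z where "Z k = (\<lambda>\<omega>. Pop N M (XR N M g W d \<omega>) (fst k) (snd k))" for k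
  have "(\<lambda>\<omega>. XR N M g W d \<omega> k1 k2) \<in> borel_measurable P" if "k1 < N" "k2 < N" for k1 k2
    using noise that distributed_measurable[of P lborel "d k1 k2"]
    by (intro borel_measurable_XR) auto
  then have measurable: "Z k \<in> borel_measurable P" for k
    unfolding Z_def by (intro borel_measurable_Pop)
  have energy: "(\<Sum>k\<in>{..<N} \<times> {..<N}. (cmod (Z k \<omega>))\<^sup>2) \<le> 2 * 255\<^sup>2 * (real M)\<^sup>2" for \<omega>
    using sum_cmod_square_Pop[of N M "XR N M g W d \<omega>"]
    by (simp add: Z_def sum.cartesian_product case_prod_beta)
  have "(\<Sum>k1<N. \<Sum>k2<N. cvariance P (\<lambda>\<omega>. Pop N M (XR N M g W d \<omega>) k1 k2))
      = (\<Sum>k\<in>{..<N} \<times> {..<N}. cvariance P (Z k))"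
    by (simp add: Z_def sum.cartesian_product case_prod_beta)
  also have "\<dots> \<le> 2 * 255\<^sup>2 * (real M)\<^sup>2"
    by (rule sum_cvariance_le[OF P _ measurable energy]) simp
  finally show "(1 / (real N)\<^sup>2) *
           (\<Sum>k1<N. \<Sum>k2<N. cvariance P (\<lambda>\<omega>. Pop N M (XR N M g W d \<omega>) k1 k2))
         \<le> 2 * 255\<^sup>2 * (real M)\<^sup>2 / (real N)\<^sup>2"
    by (simp add: divide_right_mono)
qed
end
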